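(* Let $U$ be in class $\mathcal{K}^{+}$ on $[y_1,y_2]$ and $\beta\in(\min U'',\max U'')$. If $\alpha>0$ and $\phi$ is a solution of $-\phi''+\alpha^2\phi-\frac{\beta-U''}{U-c}\phi=0$ on $(y_1,y_2)$, $\phi(y_1)=\phi(y_2)=0$, with $c=c_r+ic_i$, $c_i>0$, then $$\int_{y_1}^{y_2}(|\phi'|^2+\alpha^2|\phi|^2)\,dy\le\int_{y_1}^{y_2}K_\beta|\phi|^2\,dy,$$ $$\int_{y_1}^{y_2}(|\phi''|^2+2\alpha^2|\phi'|^2+\alpha^4|\phi|^2)\,dy\le\|K_\beta\|_{L^\infty}\int_{y_1}^{y_2}K_\beta|\phi|^2\,dy.$$
   Context: Class $\mathcal{K}^+$: $U\in C^{3}([y_1,y_2])$ is not constant, and for each $\beta\in\mathrm{Ran}(U'')$ there exists $U_\beta\in\mathrm{Ran}(U)$ such that $K_\beta(y)=\frac{\beta-U''(y)}{U(y)-U_\beta}$ is positive and bounded on $[y_1,y_2]$. *)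

theory Defs
  imports "HOL-Analysis.Analysis"
begin

definition C3_on :: "real \<Rightarrow> real \<Rightarrow> (real \<Rightarrow> real) \<Rightarrow> (real \<Rightarrow> real) \<Rightarrow> (real \<Rightarrow> real)
    \<Rightarrow> (real \<Rightarrow> real) \<Rightarrow> bool" where
  "C3_on y1 y2 U U1 U2 U3 \<longleftrightarrow>
     (\<forall>y\<in>{y1..y2}. (U has_real_derivative U1 y) (at y within {y1..y2})
                 \<and> (U1 has_real_derivative U2 y) (at y within {y1..y2})
                 \<and> (U2 has_real_derivative U3 y) (at y within {y1..y2}))
     \<and> continuous_on {y1..y2} U3"

text \<open>K_beta is positive and bounded on [y1,y2] with K_beta (U - U_beta) = beta - U''
  (i.e. K_beta = (beta - U'')/(U - U_beta), extended to the zeros of U - U_beta).\<close>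
definition is_K :: "real \<Rightarrow> real \<Rightarrow> (real \<Rightarrow> real) \<Rightarrow> (real \<Rightarrow> real) \<Rightarrow> real \<Rightarrow> real
    \<Rightarrow> (real \<Rightarrow> real) \<Rightarrow> bool" where
  "is_K y1 y2 U U2 \<beta> U\<beta> K \<longleftrightarrow>
     (\<forall>y\<in>{y1..y2}. K y > 0 \<and> K y * (U y - U\<beta>) = \<beta> - U2 y)
     \<and> bounded (K ` {y1..y2})"

definition class_Kplus :: "real \<Rightarrow> real \<Rightarrow> (real \<Rightarrow> real) \<Rightarrow> (real \<Rightarrow> real) \<Rightarrow> (real \<Rightarrow> real)
    \<Rightarrow> (real \<Rightarrow> real) \<Rightarrow> bool" where
  "class_Kplus y1 y2 U U1 U2 U3 \<longleftrightarrow>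
     C3_on y1 y2 U U1 U2 U3
     \<and> \<not> (\<exists>a. \<forall>y\<in>{y1..y2}. U y = a)
     \<and> (\<forall>\<beta>\<in>U2 ` {y1..y2}. \<exists>U\<beta>\<in>U ` {y1..y2}. \<exists>K. is_K y1 y2 U U2 \<beta> U\<beta> K)"

end

theory Submission
  imports Defs
begin

text \<open>Multiplying the Rayleigh equation by \<open>cnj \<phi>\<close> and integrating by parts, the real part gives
  \<open>\<integral> |\<phi>'|\<^sup>2 + \<alpha>\<^sup>2 |\<phi>|\<^sup>2 = \<integral> (\<beta> - U'') (U - c\<^sub>r) |\<phi>|\<^sup>2 / |U - c|\<^sup>2\<close> and, since \<open>c\<^sub>i \<noteq> 0\<close>, the
  imaginary part gives \<open>\<integral> (\<beta> - U'') |\<phi>|\<^sup>2 / |U - c|\<^sup>2 = 0\<close>. Writing \<open>\<beta> - U'' = K (U - U\<^sub>\<beta>)\<close>,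
  the weight \<open>K |\<phi>|\<^sup>2\<close> is the first integrand plus \<open>((c\<^sub>r - U\<^sub>\<beta>)\<^sup>2 + c\<^sub>i\<^sup>2) K |\<phi>|\<^sup>2 / |U - c|\<^sup>2 \<ge> 0\<close>
  plus a multiple of the vanishing integrand; the second estimate follows in the same way from
  \<open>\<phi>'' = (\<alpha>\<^sup>2 - (\<beta> - U'') / (U - c)) \<phi>\<close>, which makes \<open>|\<phi>''|\<^sup>2 + 2\<alpha>\<^sup>2|\<phi>'|\<^sup>2 + \<alpha>\<^sup>4|\<phi>|\<^sup>2\<close>
  integrate to \<open>\<integral> K\<^sup>2 (U - U\<^sub>\<beta>)\<^sup>2 |\<phi>|\<^sup>2 / |U - c|\<^sup>2\<close>.\<close>

lemma integrable_on_bounded_continuous_off_finite: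
  fixes F :: "real \<Rightarrow> real"
  assumes Z: "finite Z" and F: "continuous_on ({a..b} - Z) F"
    and bounded: "\<And>y. y \<in> {a..b} \<Longrightarrow> \<bar>F y\<bar> \<le> C"
  shows "F integrable_on {a..b}"
proof -
  let ?S = "{a..b} - Z"
  have S: "?S \<in> sets lebesgue"
    by (meson Z finite_imp_null_set_lborel fmeasurableD lmeasurable_interval(1)
        null_setsD2 sets.Diff sets_completionI_sets)
  have Fm: "F \<in> borel_measurable (lebesgue_on ?S)"
    by (rule continuous_imp_measurable_on_sets_lebesgue[OF F S])
  have "(\<lambda>_. C) integrable_on ?S"
    by (rule integrable_spike_set[OF integrable_const_ivl])
      (auto intro: negligible_subset[OF negligible_finite[OF Z]])
  then have "F integrable_on ?S"
    by (rule measurable_bounded_by_integrable_imp_integrable_real[OF Fm _ _ S]) (use bounded in auto)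
  then show ?thesis
    by (rule integrable_spike_set) (auto intro: negligible_subset[OF negligible_finite[OF Z]])
qed

lemma bounded_quotient_mult_integrable_on:
  fixes K g h w :: "real \<Rightarrow> real"
  assumes zeros: "finite {y\<in>{a..b}. g y = 0}"
    and g: "continuous_on {a..b} g" and h: "continuous_on {a..b} h" and w: "continuous_on {a..b} w"
    and K: "\<And>y. y \<in> {a..b} \<Longrightarrow> K y * g y = h y" "\<And>y. y \<in> {a..b} \<Longrightarrow> \<bar>K y\<bar> \<le> B"
  shows "(\<lambda>y. K y * w y) integrable_on {a..b}"
proof -
  let ?Z = "{y\<in>{a..b}. g y = 0}"
  obtain M where M: "\<And>y. y \<in> {a..b} \<Longrightarrow> \<bar>w y\<bar> \<le> M"
    using compact_imp_bounded[OF compact_continuous_image[OF w compact_Icc]]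
    unfolding bounded_iff by (metis image_eqI real_norm_def)
  have "continuous_on ({a..b} - ?Z) (\<lambda>y. h y / g y * w y)"
    by (intro continuous_intros continuous_on_subset[OF g] continuous_on_subset[OF h]
        continuous_on_subset[OF w]) auto
  then have "continuous_on ({a..b} - ?Z) (\<lambda>y. K y * w y)"
  proof (rule continuous_on_eq)
    fix y assume "y \<in> {a..b} - ?Z"
    then have "K y = h y / g y"
      using K(1)[of y] by (simp add: eq_divide_eq)
    then show "h y / g y * w y = K y * w y"
      by simp
  qed
  moreover have "\<bar>K y * w y\<bar> \<le> B * M" if "y \<in> {a..b}" for y
    unfolding abs_mult using K(2)[OF that] M[OF that] by (intro mult_mono) auto
  ultimately show ?thesis
    by (rule integrable_on_bounded_continuous_off_finite[OF zeros])
qed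

lemma has_real_derivative_eq_0_if_islimpt_level_set:
  fixes f :: "real \<Rightarrow> real"
  assumes f: "(f has_real_derivative D) (at p within S)"
    and p: "p islimpt {z\<in>S. f z = f p}"
  shows "D = 0"
proof -
  let ?T = "{z\<in>S. f z = f p}"
  have "((\<lambda>y. (f y - f p) / (y - p)) \<longlongrightarrow> D) (at p within S)"
    using f by (simp add: has_field_derivative_iff)
  then have "((\<lambda>y. (f y - f p) / (y - p)) \<longlongrightarrow> D) (at p within ?T)"
    by (rule tendsto_within_subset) auto
  moreover have "((\<lambda>y. (f y - f p) / (y - p)) \<longlongrightarrow> 0) (at p within ?T)"
    by (rule tendsto_eventually) (auto simp: eventually_at_filter)
  moreover have "at p within ?T \<noteq> bot"
    using p by (simp add: trivial_limit_within)
  ultimately show ?thesis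
    using tendsto_unique by blast
qed

lemma islimpt_zeros_of_derivative:
  fixes f f' :: "real \<Rightarrow> real"
  assumes p: "p islimpt {z\<in>{a..b}. f z = f p}"
    and f: "continuous_on {a..b} f"
    and f': "\<And>x. x \<in> {a<..<b} \<Longrightarrow> (f has_real_derivative f' x) (at x)"
  shows "p islimpt {z\<in>{a..b}. f' z = 0}"
  unfolding islimpt_approachable
proof (intro allI impI)
  fix e :: real
  assume "e > 0"
  with p obtain z where z: "z \<in> {a..b}" "f z = f p" "z \<noteq> p" "dist z p < e"
    unfolding islimpt_approachable by auto
  have "p islimpt {a..b}"
    by (rule islimpt_subset[OF p]) auto
  then have "p \<in> {a..b}"
    by (meson closed_atLeastAtMost closed_limpt)
  define l r where "l = min z p" and "r = max z p"
  have lr: "l < r" "a \<le> l" "r \<le> b" "f l = f r"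
    using z \<open>p \<in> {a..b}\<close> by (auto simp: l_def r_def min_def max_def)
  have "continuous_on {l..r} f"
    using lr by (intro continuous_on_subset[OF f]) auto
  moreover have "f differentiable at x" if "l < x" "x < r" for x
  proof -
    from that lr have "x \<in> {a<..<b}"
      by auto
    then show ?thesis
      using f' real_differentiable_def by blast
  qed
  ultimately obtain \<xi> where \<xi>: "l < \<xi>" "\<xi> < r" "(f has_real_derivative 0) (at \<xi>)"
    using Rolle[OF lr(1) lr(4)] by blast
  from \<xi>(1,2) lr have \<xi>_in: "\<xi> \<in> {a<..<b}"
    by auto
  have "f' \<xi> = 0"
    by (rule DERIV_unique[OF f'[OF \<xi>_in] \<xi>(3)])
  moreover have "\<xi> \<noteq> p" "dist \<xi> p < e"
    using \<xi> z(4) by (auto simp: l_def r_def dist_real_def min_def max_def split: if_splits)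
  ultimately show "\<exists>x\<in>{z\<in>{a..b}. f' z = 0}. x \<noteq> p \<and> dist x p < e"
    using \<xi>_in by (intro bexI[of _ \<xi>]) auto
qed

lemma Gronwall_vanishing_right:
  fixes E E' :: "real \<Rightarrow> real"
  assumes "p \<le> y" and E: "continuous_on {p..y} E"
    and E': "\<And>x. x \<in> {p<..<y} \<Longrightarrow> (E has_real_derivative E' x) (at x)"
    and growth: "\<And>x. x \<in> {p<..<y} \<Longrightarrow> E' x \<le> C * E x"
    and nonneg: "E y \<ge> 0" and "E p = 0"
  shows "E y = 0"
proof -
  define G where "G t = E t * exp (- C * t)" for t
  have "G y \<le> G p"
  proof (rule DERIV_nonpos_imp_decreasing_open[OF \<open>p \<le> y\<close>])
    fix x assume "p < x" "x < y"
    then have "(G has_real_derivative (E' x - C * E x) * exp (- C * x)) (at x)"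
      unfolding G_def using E'[of x] by (auto intro!: derivative_eq_intros simp: algebra_simps)
    moreover have "(E' x - C * E x) * exp (- C * x) \<le> 0"
      using growth[of x] \<open>p < x\<close> \<open>x < y\<close> by (simp add: mult_nonpos_nonneg)
    ultimately show "\<exists>d. (G has_real_derivative d) (at x) \<and> d \<le> 0"
      by blast
  qed (unfold G_def, intro continuous_intros E)
  then have "E y * exp (- C * y) \<le> 0"
    using \<open>E p = 0\<close> by (simp add: G_def)
  with nonneg show ?thesis
    by (simp add: mult_le_0_iff)
qed

lemma Gronwall_vanishing_left:
  fixes E E' :: "real \<Rightarrow> real"
  assumes "y \<le> p" and E: "continuous_on {y..p} E"
    and E': "\<And>x. x \<in> {y<..<p} \<Longrightarrow> (E has_real_derivative E' x) (at x)"
    and growth: "\<And>x. x \<in> {y<..<p} \<Longrightarrow> - E' x \<le> C * E x"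
    and nonneg: "E y \<ge> 0" and "E p = 0"
  shows "E y = 0"
proof -
  have "(E \<circ> uminus) (- y) = 0"
  proof (rule Gronwall_vanishing_right[where E = "E \<circ> uminus" and E' = "\<lambda>x. - E' (- x)" and C = C and p = "- p" and y = "- y"])
    show "continuous_on {- p..- y} (E \<circ> uminus)"
      by (intro continuous_on_compose continuous_intros continuous_on_subset[OF E]) auto
    fix x assume x: "x \<in> {- p<..<- y}"
    then have "(E has_real_derivative E' (- x)) (at (- x))"
      by (intro E') auto
    from DERIV_chain2[OF this DERIV_minus[OF DERIV_ident]]
    show "((E \<circ> uminus) has_real_derivative - E' (- x)) (at x)"
      by (simp add: o_def)
    show "- E' (- x) \<le> C * (E \<circ> uminus) x"
      using growth[of "- x"] x by auto
  qed (use assms in auto)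
  then show ?thesis by simp
qed

lemma second_order_vanishing:
  fixes f f' f'' :: "real \<Rightarrow> real"
  assumes f: "\<And>x. x \<in> {a..b} \<Longrightarrow> (f has_real_derivative f' x) (at x within {a..b})"
    and f': "\<And>x. x \<in> {a..b} \<Longrightarrow> (f' has_real_derivative f'' x) (at x within {a..b})"
    and bound: "\<And>x. x \<in> {a..b} \<Longrightarrow> \<bar>f'' x\<bar> \<le> M * \<bar>f x\<bar>"
    and p: "p \<in> {a..b}" "f p = 0" "f' p = 0"
    and y: "y \<in> {a..b}"
  shows "f y = 0"
proof -
  define C where "C = 1 + \<bar>M\<bar>"
  define E where "E t = (f t)\<^sup>2 + (f' t)\<^sup>2" for t
  define E' where "E' t = 2 * f t * f' t + 2 * f' t * f'' t" for t
  have E_within: "(E has_real_derivative E' t) (at t within {a..b})" if "t \<in> {a..b}" for t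
    unfolding E_def E'_def
    by (rule derivative_eq_intros f[OF that] f'[OF that] refl)+ (simp add: algebra_simps)
  then have E_cont: "continuous_on {a..b} E"
    by (meson DERIV_continuous continuous_on_eq_continuous_within)
  have E_at: "(E has_real_derivative E' t) (at t)" if "t \<in> {a<..<b}" for t
    using E_within[of t] that at_within_Icc_at[of a t b] by auto
  have growth: "\<bar>E' t\<bar> \<le> C * E t" if "t \<in> {a..b}" for t
  proof -
    have "\<bar>E' t\<bar> \<le> 2 * \<bar>f t\<bar> * \<bar>f' t\<bar> + 2 * \<bar>f' t\<bar> * \<bar>f'' t\<bar>"
      unfolding E'_def by (simp add: abs_mult order_trans[OF abs_triangle_ineq])
    also have "\<dots> \<le> 2 * \<bar>f t\<bar> * \<bar>f' t\<bar> + 2 * \<bar>f' t\<bar> * (\<bar>M\<bar> * \<bar>f t\<bar>)"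
      using order_trans[OF bound[OF that] mult_right_mono[OF abs_ge_self abs_ge_zero]]
      by (intro add_left_mono mult_left_mono) auto
    also have "\<dots> = C * (2 * \<bar>f t\<bar> * \<bar>f' t\<bar>)"
      by (simp add: C_def algebra_simps)
    also have "\<dots> \<le> C * E t"
    proof (rule mult_left_mono)
      have "0 \<le> (\<bar>f t\<bar> - \<bar>f' t\<bar>)\<^sup>2"
        by simp
      then show "2 * \<bar>f t\<bar> * \<bar>f' t\<bar> \<le> E t"
        unfolding E_def by (simp add: power2_eq_square algebra_simps)
    qed (simp add: C_def)
    finally show ?thesis .
  qed
  have "E p = 0"
    using p by (simp add: E_def)
  have "E y = 0"
  proof (cases "p \<le> y")
    case True
    then show ?thesis
      using p(1) y growth
      by (intro Gronwall_vanishing_right[OF True continuous_on_subset[OF E_cont] E_at _ _ \<open>E p = 0\<close>,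
            where C = C]) (auto simp: E_def abs_le_iff)
  next
    case False
    then show ?thesis
      using p(1) y growth
      by (intro Gronwall_vanishing_left[of y p, OF _ continuous_on_subset[OF E_cont] E_at _ _ \<open>E p = 0\<close>,
            where C = C]) (auto simp: E_def abs_le_iff)
  qed
  then show ?thesis
    by (simp add: E_def)
qed

lemma finite_zeros_second_order_bounded_coefficient:
  fixes f f' f'' K :: "real \<Rightarrow> real"
  assumes f: "\<And>x. x \<in> {a..b} \<Longrightarrow> (f has_real_derivative f' x) (at x within {a..b})"
    and f': "\<And>x. x \<in> {a..b} \<Longrightarrow> (f' has_real_derivative f'' x) (at x within {a..b})"
    and eq: "\<And>x. x \<in> {a..b} \<Longrightarrow> K x * f x = \<beta> - f'' x"
    and K: "\<And>x. x \<in> {a..b} \<Longrightarrow> \<bar>K x\<bar> \<le> B"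
    and nonzero: "\<exists>x\<in>{a..b}. f x \<noteq> 0"
  shows "finite {x\<in>{a..b}. f x = 0}"
proof (rule ccontr)
  let ?Z = "{x\<in>{a..b}. f x = 0}"
  assume "infinite ?Z"
  moreover have "?Z \<subseteq> {a..b}"
    by blast
  ultimately obtain p where p: "p \<in> {a..b}" "p islimpt ?Z"
    using Heine_Borel_imp_Bolzano_Weierstrass[OF compact_Icc] by blast
  have f_cont: "continuous_on {a..b} f"
    using f by (meson DERIV_continuous continuous_on_eq_continuous_within)
  have f_at: "(f has_real_derivative f' x) (at x)" if "x \<in> {a<..<b}" for x
    using f[of x] that at_within_Icc_at[of a x b] by auto
  have "closed ?Z"
    by (rule continuous_closed_preimage_constant[OF f_cont]) simp
  then have "f p = 0"
    using p(2) closed_limpt by blast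
  with p(2) have p_level: "p islimpt {x\<in>{a..b}. f x = f p}"
    by simp
  have "f' p = 0"
    by (rule has_real_derivative_eq_0_if_islimpt_level_set[OF f[OF p(1)] p_level])
  moreover have "p islimpt {x\<in>{a..b}. f' x = 0}"
    by (rule islimpt_zeros_of_derivative[OF p_level f_cont f_at])
  ultimately have "f'' p = 0"
    using has_real_derivative_eq_0_if_islimpt_level_set[OF f'[OF p(1)]] by simp
  with eq[OF p(1)] \<open>f p = 0\<close> have "\<beta> = 0"
    by simp
  have "\<bar>f'' x\<bar> \<le> B * \<bar>f x\<bar>" if "x \<in> {a..b}" for x
  proof -
    have "f'' x = - (K x * f x)"
      using eq[OF that] \<open>\<beta> = 0\<close> by simp
    then have "\<bar>f'' x\<bar> = \<bar>K x\<bar> * \<bar>f x\<bar>"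
      by (simp add: abs_mult)
    then show ?thesis
      using K[OF that] by (simp add: mult_right_mono)
  qed
  then have "f x = 0" if "x \<in> {a..b}" for x
    using second_order_vanishing[OF f f' _ p(1) \<open>f p = 0\<close> \<open>f' p = 0\<close> that] by blast
  with nonzero show False
    by blast
qed

lemma C3_on_continuous:
  assumes "C3_on a b U U1 U2 U3"
  shows "continuous_on {a..b} U" and "continuous_on {a..b} U2"
  using assms unfolding C3_on_def
  by (meson DERIV_continuous continuous_on_eq_continuous_within)+

text \<open>\<open>K\<close> need not be measurable; it agrees with the continuous quotient \<open>(\<beta> - U'') / (U - U\<beta>)\<close>
  off the zeros of \<open>U - U\<beta>\<close>, which are finitely many because \<open>U\<close> is not constant (the only use of
  that hypothesis).\<close>
lemma is_K_mult_integrable_on: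
  assumes "class_Kplus a b U U1 U2 U3" and "is_K a b U U2 \<beta> U\<beta> K"
    and w: "continuous_on {a..b} w"
  shows "(\<lambda>y. K y * w y) integrable_on {a..b}"
proof -
  have C3: "C3_on a b U U1 U2 U3" and U_nonconstant: "\<exists>y\<in>{a..b}. U y - U\<beta> \<noteq> 0"
    using assms(1) unfolding class_Kplus_def by auto
  have U: "\<And>y. y \<in> {a..b} \<Longrightarrow> (U has_real_derivative U1 y) (at y within {a..b})"
    and U1: "\<And>y. y \<in> {a..b} \<Longrightarrow> (U1 has_real_derivative U2 y) (at y within {a..b})"
    using C3 unfolding C3_on_def by auto
  have K_eq: "\<And>y. y \<in> {a..b} \<Longrightarrow> K y * (U y - U\<beta>) = \<beta> - U2 y"
    using assms(2) unfolding is_K_def by auto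
  obtain B where B: "\<And>y. y \<in> {a..b} \<Longrightarrow> \<bar>K y\<bar> \<le> B"
    using assms(2) unfolding is_K_def bounded_iff by (metis image_eqI real_norm_def)
  have "finite {y\<in>{a..b}. U y - U\<beta> = 0}"
    by (rule finite_zeros_second_order_bounded_coefficient[OF _ U1 K_eq B U_nonconstant])
      (use U in \<open>auto intro!: derivative_eq_intros\<close>)
  then show ?thesis
    by (rule bounded_quotient_mult_integrable_on[OF _ _ _ w K_eq B])
      (auto intro!: continuous_intros C3_on_continuous[OF C3])
qed

lemma continuous_extension_of_derivative:
  fixes f' g :: "real \<Rightarrow> 'a::banach"
  assumes "a < b" and g: "continuous_on {a..b} g"
    and f': "\<And>x. x \<in> {a<..<b} \<Longrightarrow> (f' has_vector_derivative g x) (at x)"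
  obtains D where "continuous_on {a..b} D"
    and "\<And>x. x \<in> {a<..<b} \<Longrightarrow> (D has_vector_derivative g x) (at x)"
    and "\<And>x. x \<in> {a<..<b} \<Longrightarrow> f' x = D x"
proof
  define m where "m = (a + b) / 2"
  have m: "m \<in> {a<..<b}"
    using \<open>a < b\<close> by (simp add: m_def)
  define D where "D x = f' m + (integral {a..x} g - integral {a..m} g)" for x
  have D_within: "(D has_vector_derivative g x) (at x within {a..b})" if "x \<in> {a..b}" for x
    unfolding D_def using integral_has_vector_derivative[OF g that]
    by (auto intro!: derivative_eq_intros)
  then show "continuous_on {a..b} D"
    by (meson has_vector_derivative_continuous continuous_on_eq_continuous_within)
  show D_at: "(D has_vector_derivative g x) (at x)" if "x \<in> {a<..<b}" for x
    using D_within[of x] that at_within_Icc_at[of a x b] by auto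
  obtain k where k: "\<And>x. x \<in> {a<..<b} \<Longrightarrow> f' x - D x = k"
  proof -
    have "\<exists>k. \<forall>x\<in>{a<..<b}. f' x - D x = k"
    proof (rule has_derivative_zero_constant)
      fix x assume x: "x \<in> {a<..<b}"
      have "((\<lambda>x. f' x - D x) has_vector_derivative 0) (at x)"
        using has_vector_derivative_diff[OF f'[OF x] D_at[OF x]] by simp
      then show "((\<lambda>x. f' x - D x) has_derivative (\<lambda>h. 0)) (at x within {a<..<b})"
        by (simp add: has_vector_derivative_def has_derivative_at_withinI)
    qed simp
    with that show ?thesis
      by blast
  qed
  have "k = 0"
    using k[OF m] by (simp add: D_def)
  then show "f' x = D x" if "x \<in> {a<..<b}" for x
    using k[OF that] by simp
qed

lemma Dirichlet_energy_identity:
  fixes \<phi> d\<phi> q :: "real \<Rightarrow> complex"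
  assumes "a < b" and \<phi>: "continuous_on {a..b} \<phi>" and q: "continuous_on {a..b} q"
    and d\<phi>: "\<And>x. x \<in> {a<..<b} \<Longrightarrow> (\<phi> has_vector_derivative d\<phi> x) (at x)"
    and dd\<phi>: "\<And>x. x \<in> {a<..<b} \<Longrightarrow> (d\<phi> has_vector_derivative q x * \<phi> x) (at x)"
    and "\<phi> a = 0" "\<phi> b = 0"
  shows "((\<lambda>x. of_real ((cmod (d\<phi> x))\<^sup>2) + q x * of_real ((cmod (\<phi> x))\<^sup>2)) has_integral 0) {a..b}"
proof -
  obtain D where D: "continuous_on {a..b} D"
    and D_at: "\<And>x. x \<in> {a<..<b} \<Longrightarrow> (D has_vector_derivative q x * \<phi> x) (at x)"
    and d\<phi>_eq: "\<And>x. x \<in> {a<..<b} \<Longrightarrow> d\<phi> x = D x"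
    using continuous_extension_of_derivative[OF \<open>a < b\<close> continuous_on_mult[OF q \<phi>] dd\<phi>]
    by blast
  have "((\<lambda>x. D x * cnj (D x) + q x * \<phi> x * cnj (\<phi> x)) has_integral
      D b * cnj (\<phi> b) - D a * cnj (\<phi> a)) {a..b}"
  proof (rule fundamental_theorem_of_calculus_interior)
    show "continuous_on {a..b} (\<lambda>x. D x * cnj (\<phi> x))"
      by (intro continuous_intros D \<phi>)
    fix x assume x: "x \<in> {a<..<b}"
    from has_vector_derivative_mult[OF D_at[OF x] has_vector_derivative_cnj[OF d\<phi>[OF x]]]
    show "((\<lambda>x. D x * cnj (\<phi> x)) has_vector_derivative
        D x * cnj (D x) + q x * \<phi> x * cnj (\<phi> x)) (at x)"
      using d\<phi>_eq[OF x] by simp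
  qed (use \<open>a < b\<close> in simp)
  then have "((\<lambda>x. D x * cnj (D x) + q x * \<phi> x * cnj (\<phi> x)) has_integral 0) {a..b}"
    using \<open>\<phi> a = 0\<close> \<open>\<phi> b = 0\<close> by simp
  then show ?thesis
  proof (rule has_integral_spike[of "{a, b}", rotated 2])
    fix x assume "x \<in> {a..b} - {a, b}"
    then have "d\<phi> x = D x"
      by (intro d\<phi>_eq) auto
    then show "of_real ((cmod (d\<phi> x))\<^sup>2) + q x * of_real ((cmod (\<phi> x))\<^sup>2)
        = D x * cnj (D x) + q x * \<phi> x * cnj (\<phi> x)"
      by (simp only: complex_norm_square mult.assoc)
  qed simp
qed

lemma cmod_Rayleigh_coefficient_square:
  fixes \<alpha> h u :: real and c :: complex
  assumes "Im c \<noteq> 0"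
  shows "(cmod (complex_of_real (\<alpha>\<^sup>2) - complex_of_real h / (complex_of_real u - c)))\<^sup>2
       = \<alpha>^4 - 2 * \<alpha>\<^sup>2 * (h * (u - Re c) / (cmod (complex_of_real u - c))\<^sup>2)
         + h\<^sup>2 / (cmod (complex_of_real u - c))\<^sup>2"
proof -
  define d where "d = (cmod (complex_of_real u - c))\<^sup>2"
  have d: "d = (u - Re c)\<^sup>2 + (Im c)\<^sup>2" "d \<noteq> 0"
    using assms by (auto simp: d_def cmod_power2)
  define X Y where "X = h * (u - Re c) / d" and "Y = h * Im c / d"
  have "(cmod (complex_of_real (\<alpha>\<^sup>2) - complex_of_real h / (complex_of_real u - c)))\<^sup>2
      = (\<alpha>\<^sup>2 - X)\<^sup>2 + Y\<^sup>2"
    by (simp add: X_def Y_def cmod_power2 Re_divide Im_divide d(1)[symmetric])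
  moreover have "X\<^sup>2 + Y\<^sup>2 = h\<^sup>2 * ((u - Re c)\<^sup>2 + (Im c)\<^sup>2) / d\<^sup>2"
    by (simp add: X_def Y_def power_divide power_mult_distrib add_divide_distrib distrib_left)
  moreover have "h\<^sup>2 * ((u - Re c)\<^sup>2 + (Im c)\<^sup>2) / d\<^sup>2 = h\<^sup>2 / d"
    by (simp only: d(1)[symmetric]) (simp add: d(2) power2_eq_square)
  moreover have "h * (u - Re c) / d = X"
    by (simp add: X_def)
  ultimately show ?thesis
    unfolding d_def[symmetric] by algebra
qed

lemma Rayleigh_energy_identities:
  fixes U h :: "real \<Rightarrow> real" and \<phi> d\<phi> dd\<phi> :: "real \<Rightarrow> complex" and c :: complex
  assumes "a < b" and U: "continuous_on {a..b} U" and h: "continuous_on {a..b} h"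
    and "Im c \<noteq> 0"
    and \<phi>: "continuous_on {a..b} \<phi>"
    and d\<phi>: "\<And>y. y \<in> {a<..<b} \<Longrightarrow> (\<phi> has_vector_derivative d\<phi> y) (at y)"
    and dd\<phi>: "\<And>y. y \<in> {a<..<b} \<Longrightarrow> (d\<phi> has_vector_derivative dd\<phi> y) (at y)"
    and eq: "\<And>y. y \<in> {a<..<b} \<Longrightarrow>
               - dd\<phi> y + complex_of_real (\<alpha>^2) * \<phi> y
               - (complex_of_real (h y) / (complex_of_real (U y) - c)) * \<phi> y = 0"
    and "\<phi> a = 0" "\<phi> b = 0"
  shows "((\<lambda>y. (cmod (d\<phi> y))\<^sup>2 + \<alpha>\<^sup>2 * (cmod (\<phi> y))\<^sup>2
            - h y * (U y - Re c) * (cmod (\<phi> y))\<^sup>2 / (cmod (complex_of_real (U y) - c))\<^sup>2)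
          has_integral 0) {a..b}"
    and "((\<lambda>y. h y * (cmod (\<phi> y))\<^sup>2 / (cmod (complex_of_real (U y) - c))\<^sup>2) has_integral 0) {a..b}"
proof -
  define q where "q y = complex_of_real (\<alpha>\<^sup>2) - complex_of_real (h y) / (complex_of_real (U y) - c)" for y
  define den where "den y = (cmod (complex_of_real (U y) - c))\<^sup>2" for y
  have Uc: "complex_of_real (U y) - c \<noteq> 0" for y
    using \<open>Im c \<noteq> 0\<close> by (metis Im_complex_of_real right_minus_eq)
  have "continuous_on {a..b} q"
    unfolding q_def by (intro continuous_intros U h) (use Uc in auto)
  moreover have "(d\<phi> has_vector_derivative q y * \<phi> y) (at y)" if "y \<in> {a<..<b}" for y
  proof -
    have "dd\<phi> y = q y * \<phi> y"
      using eq[OF that] by (simp add: q_def algebra_simps)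
    with dd\<phi>[OF that] show ?thesis
      by simp
  qed
  ultimately have energy: "((\<lambda>y. of_real ((cmod (d\<phi> y))\<^sup>2) + q y * of_real ((cmod (\<phi> y))\<^sup>2))
      has_integral 0) {a..b}"
    using Dirichlet_energy_identity[OF \<open>a < b\<close> \<phi> _ d\<phi>] \<open>\<phi> a = 0\<close> \<open>\<phi> b = 0\<close> by blast
  have Re_q: "Re (q y) = \<alpha>\<^sup>2 - h y * (U y - Re c) / den y" for y
    by (simp add: q_def den_def Re_divide cmod_power2)
  have Im_q: "Im (q y) = - (Im c * (h y / den y))" for y
    by (simp add: q_def den_def Im_divide cmod_power2)
  show "((\<lambda>y. (cmod (d\<phi> y))\<^sup>2 + \<alpha>\<^sup>2 * (cmod (\<phi> y))\<^sup>2
            - h y * (U y - Re c) * (cmod (\<phi> y))\<^sup>2 / (cmod (complex_of_real (U y) - c))\<^sup>2)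
          has_integral 0) {a..b}"
    using has_integral_Re[OF energy] by (simp add: Re_q den_def algebra_simps)
  have "((\<lambda>y. - Im c * (h y * (cmod (\<phi> y))\<^sup>2 / den y)) has_integral 0) {a..b}"
    using has_integral_Im[OF energy] by (simp add: Im_q mult.assoc)
  then have "((\<lambda>y. h y * (cmod (\<phi> y))\<^sup>2 / den y) has_integral 0) {a..b}"
    using has_integral_mult_right_iff[of "- Im c"] \<open>Im c \<noteq> 0\<close> by (metis div_0 neg_equal_0_iff_equal)
  then show "((\<lambda>y. h y * (cmod (\<phi> y))\<^sup>2 / (cmod (complex_of_real (U y) - c))\<^sup>2) has_integral 0) {a..b}"
    by (simp add: den_def)
qed

lemma Rayleigh_integral_identities:
  fixes U h :: "real \<Rightarrow> real" and \<phi> d\<phi> dd\<phi> :: "real \<Rightarrow> complex" and c :: complex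
  assumes "a < b" and U: "continuous_on {a..b} U" and h: "continuous_on {a..b} h"
    and "Im c \<noteq> 0"
    and \<phi>: "continuous_on {a..b} \<phi>"
    and d\<phi>: "\<And>y. y \<in> {a<..<b} \<Longrightarrow> (\<phi> has_vector_derivative d\<phi> y) (at y)"
    and dd\<phi>: "\<And>y. y \<in> {a<..<b} \<Longrightarrow> (d\<phi> has_vector_derivative dd\<phi> y) (at y)"
    and eq: "\<And>y. y \<in> {a<..<b} \<Longrightarrow>
               - dd\<phi> y + complex_of_real (\<alpha>^2) * \<phi> y
               - (complex_of_real (h y) / (complex_of_real (U y) - c)) * \<phi> y = 0"
    and "\<phi> a = 0" "\<phi> b = 0"
  shows "integral {a..b} (\<lambda>y. (cmod (d\<phi> y))\<^sup>2 + \<alpha>\<^sup>2 * (cmod (\<phi> y))\<^sup>2)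
       = integral {a..b} (\<lambda>y. h y * (U y - Re c) * (cmod (\<phi> y))\<^sup>2 / (cmod (complex_of_real (U y) - c))\<^sup>2)"
    and "integral {a..b} (\<lambda>y. (cmod (dd\<phi> y))\<^sup>2 + 2 * \<alpha>\<^sup>2 * (cmod (d\<phi> y))\<^sup>2 + \<alpha>^4 * (cmod (\<phi> y))\<^sup>2)
       = integral {a..b} (\<lambda>y. (h y)\<^sup>2 * (cmod (\<phi> y))\<^sup>2 / (cmod (complex_of_real (U y) - c))\<^sup>2)"
proof -
  define A where "A y = (cmod (\<phi> y))\<^sup>2" for y
  define den where "den y = (cmod (complex_of_real (U y) - c))\<^sup>2" for y
  define P where "P y = h y * (U y - Re c) * A y / den y" for y
  define H where "H y = (h y)\<^sup>2 * A y / den y" for y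
  have den: "den y \<noteq> 0" for y
    using \<open>Im c \<noteq> 0\<close> by (auto simp: den_def cmod_power2)
  have cont: "continuous_on {a..b} A" "continuous_on {a..b} den"
    unfolding A_def den_def by (intro continuous_intros \<phi> U)+
  have P: "(P has_integral integral {a..b} P) {a..b}" and H: "(H has_integral integral {a..b} H) {a..b}"
    unfolding P_def H_def
    by (auto intro!: integrable_integral integrable_continuous_interval continuous_intros U h cont
        simp: den)
  have R: "((\<lambda>y. (cmod (d\<phi> y))\<^sup>2 + \<alpha>\<^sup>2 * A y - P y) has_integral 0) {a..b}"
    using Rayleigh_energy_identities(1)[OF assms] by (simp add: A_def P_def den_def)
  have "((\<lambda>y. (cmod (d\<phi> y))\<^sup>2 + \<alpha>\<^sup>2 * A y) has_integral integral {a..b} P) {a..b}"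
    using has_integral_add[OF R P] by simp
  then show "integral {a..b} (\<lambda>y. (cmod (d\<phi> y))\<^sup>2 + \<alpha>\<^sup>2 * (cmod (\<phi> y))\<^sup>2)
       = integral {a..b} (\<lambda>y. h y * (U y - Re c) * (cmod (\<phi> y))\<^sup>2 / (cmod (complex_of_real (U y) - c))\<^sup>2)"
    unfolding A_def P_def den_def by (rule integral_unique)
  have pointwise: "(cmod (dd\<phi> y))\<^sup>2 + 2 * \<alpha>\<^sup>2 * (cmod (d\<phi> y))\<^sup>2 + \<alpha>^4 * A y
      = H y + 2 * \<alpha>\<^sup>2 * ((cmod (d\<phi> y))\<^sup>2 + \<alpha>\<^sup>2 * A y - P y)" if "y \<in> {a<..<b}" for y
  proof -
    have "dd\<phi> y = (complex_of_real (\<alpha>\<^sup>2) - complex_of_real (h y) / (complex_of_real (U y) - c)) * \<phi> y"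
      using eq[OF that] by (simp add: algebra_simps)
    then have "(cmod (dd\<phi> y))\<^sup>2
        = (\<alpha>^4 - 2 * \<alpha>\<^sup>2 * (h y * (U y - Re c) / den y) + (h y)\<^sup>2 / den y) * A y"
      using cmod_Rayleigh_coefficient_square[OF \<open>Im c \<noteq> 0\<close>, of \<alpha> "h y" "U y"]
      by (simp add: A_def den_def norm_mult power_mult_distrib)
    moreover have "H y = (h y)\<^sup>2 / den y * A y" and "P y = h y * (U y - Re c) / den y * A y"
      by (simp_all add: H_def P_def)
    ultimately show ?thesis
      by algebra
  qed
  have "((\<lambda>y. H y + 2 * \<alpha>\<^sup>2 * ((cmod (d\<phi> y))\<^sup>2 + \<alpha>\<^sup>2 * A y - P y)) has_integral integral {a..b} H) {a..b}"
    using has_integral_add[OF H has_integral_mult_right[OF R, of "2 * \<alpha>\<^sup>2"]] by simp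
  then have "((\<lambda>y. (cmod (dd\<phi> y))\<^sup>2 + 2 * \<alpha>\<^sup>2 * (cmod (d\<phi> y))\<^sup>2 + \<alpha>^4 * A y)
      has_integral integral {a..b} H) {a..b}"
    by (rule has_integral_spike[of "{a, b}", rotated 2]) (use pointwise in auto)
  then show "integral {a..b} (\<lambda>y. (cmod (dd\<phi> y))\<^sup>2 + 2 * \<alpha>\<^sup>2 * (cmod (d\<phi> y))\<^sup>2 + \<alpha>^4 * (cmod (\<phi> y))\<^sup>2)
       = integral {a..b} (\<lambda>y. (h y)\<^sup>2 * (cmod (\<phi> y))\<^sup>2 / (cmod (complex_of_real (U y) - c))\<^sup>2)"
    unfolding A_def H_def den_def by (rule integral_unique)
qed

lemma weight_decompositions:
  fixes k f x e g h d A :: real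
  assumes "h = k * f" "x = f - e" "d = x\<^sup>2 + g\<^sup>2" "d \<noteq> 0"
  shows "k * A = h * x * A / d + (e\<^sup>2 + g\<^sup>2) * (k * (A / d)) - e * (h * A / d)"
    and "k * A = k * (f\<^sup>2 * A / d) + (e\<^sup>2 + g\<^sup>2) * (k * (A / d)) - 2 * e * (h * A / d)"
proof -
  have "h * x * A / d + (e\<^sup>2 + g\<^sup>2) * (k * (A / d)) - e * (h * A / d)
      = k * A / d * (f * x + (e\<^sup>2 + g\<^sup>2) - e * f)"
    using \<open>d \<noteq> 0\<close> unfolding \<open>h = k * f\<close> by (simp add: field_simps)
  also have "f * x + (e\<^sup>2 + g\<^sup>2) - e * f = d"
    unfolding assms(3,2) by (simp add: power2_eq_square algebra_simps)
  finally show "k * A = h * x * A / d + (e\<^sup>2 + g\<^sup>2) * (k * (A / d)) - e * (h * A / d)"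
    using \<open>d \<noteq> 0\<close> by simp
  have "k * (f\<^sup>2 * A / d) + (e\<^sup>2 + g\<^sup>2) * (k * (A / d)) - 2 * e * (h * A / d)
      = k * A / d * (f\<^sup>2 + (e\<^sup>2 + g\<^sup>2) - 2 * e * f)"
    using \<open>d \<noteq> 0\<close> unfolding \<open>h = k * f\<close> by (simp add: field_simps)
  also have "f\<^sup>2 + (e\<^sup>2 + g\<^sup>2) - 2 * e * f = d"
    unfolding assms(3,2) by (simp add: power2_eq_square algebra_simps)
  finally show "k * A = k * (f\<^sup>2 * A / d) + (e\<^sup>2 + g\<^sup>2) * (k * (A / d)) - 2 * e * (h * A / d)"
    using \<open>d \<noteq> 0\<close> by simp
qed

lemma integral_le_if_decomposition:
  fixes X F N Z :: "real \<Rightarrow> real"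
  assumes F: "F integrable_on S" and N: "N integrable_on S" "\<And>x. x \<in> S \<Longrightarrow> N x \<ge> 0"
    and Z: "(Z has_integral 0) S" and "r \<ge> 0"
    and decomposition: "\<And>x. x \<in> S \<Longrightarrow> F x = X x + r * N x - s * Z x"
  shows "integral S X \<le> integral S F"
proof -
  have "((\<lambda>x. F x - r * N x + s * Z x) has_integral integral S F - r * integral S N + s * 0) S"
    using F N(1) Z by (intro has_integral_add has_integral_diff has_integral_mult_right) auto
  then have "((\<lambda>x. F x - r * N x + s * Z x) has_integral integral S F - r * integral S N) S"
    by simp
  then have "(X has_integral integral S F - r * integral S N) S"
    by (rule has_integral_eq[rotated]) (simp add: decomposition)
  moreover have "integral S N \<ge> 0"
    using N by (rule integral_nonneg)
  ultimately show ?thesis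
    using \<open>r \<ge> 0\<close> by (simp add: integral_unique)
qed

lemma integral_mult_le_SUP_abs:
  fixes K w :: "real \<Rightarrow> real"
  assumes K: "bdd_above ((\<lambda>y. \<bar>K y\<bar>) ` S)"
    and w: "w integrable_on S" "\<And>y. y \<in> S \<Longrightarrow> w y \<ge> 0"
    and Kw: "(\<lambda>y. K y * w y) integrable_on S"
  shows "integral S (\<lambda>y. K y * w y) \<le> (SUP y\<in>S. \<bar>K y\<bar>) * integral S w"
proof -
  have "K y * w y \<le> (SUP y\<in>S. \<bar>K y\<bar>) * w y" if "y \<in> S" for y
    using cSUP_upper[OF that K] w(2)[OF that] by (intro mult_right_mono) auto
  then have "integral S (\<lambda>y. K y * w y) \<le> integral S (\<lambda>y. (SUP y\<in>S. \<bar>K y\<bar>) * w y)"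
    by (intro integral_le Kw integrable_on_mult_right w(1))
  then show ?thesis
    by (simp only: integral_mult[OF w(1)])
qed

lemma K_weighted_integral_bounds:
  fixes U h K A :: "real \<Rightarrow> real" and c :: complex
  assumes "a \<le> b" and "Im c \<noteq> 0"
    and U: "continuous_on {a..b} U" and h: "continuous_on {a..b} h"
    and A: "continuous_on {a..b} A" "\<And>y. y \<in> {a..b} \<Longrightarrow> A y \<ge> 0"
    and K: "\<And>y. y \<in> {a..b} \<Longrightarrow> K y > 0" "\<And>y. y \<in> {a..b} \<Longrightarrow> K y * (U y - U\<^sub>0) = h y"
    and K_bdd: "bdd_above ((\<lambda>y. \<bar>K y\<bar>) ` {a..b})"
    and K_int: "\<And>w. continuous_on {a..b} w \<Longrightarrow> (\<lambda>y. K y * w y) integrable_on {a..b}"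
    and moment: "((\<lambda>y. h y * A y / (cmod (complex_of_real (U y) - c))\<^sup>2) has_integral 0) {a..b}"
  shows "integral {a..b} (\<lambda>y. h y * (U y - Re c) * A y / (cmod (complex_of_real (U y) - c))\<^sup>2)
           \<le> integral {a..b} (\<lambda>y. K y * A y)"
    and "integral {a..b} (\<lambda>y. (h y)\<^sup>2 * A y / (cmod (complex_of_real (U y) - c))\<^sup>2)
           \<le> (SUP y\<in>{a..b}. \<bar>K y\<bar>) * integral {a..b} (\<lambda>y. K y * A y)"
proof -
  define den where "den y = (cmod (complex_of_real (U y) - c))\<^sup>2" for y
  define e where "e = Re c - U\<^sub>0"
  define v where "v y = (U y - U\<^sub>0)\<^sup>2 * A y / den y" for y
  have den: "den y = (U y - Re c)\<^sup>2 + (Im c)\<^sup>2" "den y > 0" "den y \<noteq> 0" for y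
    using \<open>Im c \<noteq> 0\<close> by (auto simp: den_def cmod_power2 add_nonneg_pos)
  have den_cont: "continuous_on {a..b} den"
    unfolding den_def by (intro continuous_intros U)
  have KA: "(\<lambda>y. K y * A y) integrable_on {a..b}"
    by (rule K_int[OF A(1)])
  have KA_den: "(\<lambda>y. K y * (A y / den y)) integrable_on {a..b}"
    by (intro K_int continuous_intros A(1) den_cont) (simp add: den(3))
  have KA_den_nonneg: "K y * (A y / den y) \<ge> 0" if "y \<in> {a..b}" for y
    using K(1)[OF that] A(2)[OF that] den(2)[of y] by simp
  have Kv: "(\<lambda>y. K y * v y) integrable_on {a..b}"
    unfolding v_def by (intro K_int continuous_intros U A(1) den_cont) (simp add: den(3))
  have "integral {a..b} (\<lambda>y. h y * (U y - Re c) * A y / den y) \<le> integral {a..b} (\<lambda>y. K y * A y)"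
  proof (rule integral_le_if_decomposition[OF KA KA_den KA_den_nonneg moment[folded den_def]])
    fix y assume y: "y \<in> {a..b}"
    show "K y * A y = h y * (U y - Re c) * A y / den y + (e\<^sup>2 + (Im c)\<^sup>2) * (K y * (A y / den y))
        - e * (h y * A y / den y)"
      by (rule weight_decompositions(1)[where f = "U y - U\<^sub>0"]) (use K(2)[OF y] den in \<open>auto simp: e_def\<close>)
  qed (auto intro!: add_nonneg_nonneg)
  then show "integral {a..b} (\<lambda>y. h y * (U y - Re c) * A y / (cmod (complex_of_real (U y) - c))\<^sup>2)
           \<le> integral {a..b} (\<lambda>y. K y * A y)"
    by (simp add: den_def)
  have "integral {a..b} (\<lambda>y. K y * v y) \<le> integral {a..b} (\<lambda>y. K y * A y)"
  proof (rule integral_le_if_decomposition[OF KA KA_den KA_den_nonneg moment[folded den_def]])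
    fix y assume y: "y \<in> {a..b}"
    show "K y * A y = K y * v y + (e\<^sup>2 + (Im c)\<^sup>2) * (K y * (A y / den y)) - 2 * e * (h y * A y / den y)"
      unfolding v_def
      by (rule weight_decompositions(2)) (use K(2)[OF y] den in \<open>auto simp: e_def\<close>)
  qed (auto intro!: add_nonneg_nonneg)
  moreover have "(SUP y\<in>{a..b}. \<bar>K y\<bar>) \<ge> 0"
    using cSUP_upper[OF _ K_bdd, of a] \<open>a \<le> b\<close> abs_ge_zero[of "K a"] by simp
  moreover have "integral {a..b} (\<lambda>y. (h y)\<^sup>2 * A y / den y)
      \<le> (SUP y\<in>{a..b}. \<bar>K y\<bar>) * integral {a..b} (\<lambda>y. K y * v y)"
  proof -
    have K_Kv: "(h y)\<^sup>2 * A y / den y = K y * (K y * v y)" if "y \<in> {a..b}" for y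
      unfolding v_def K(2)[OF that, symmetric] by (simp add: power2_eq_square)
    have Kv_nonneg: "K y * v y \<ge> 0" if "y \<in> {a..b}" for y
      using K(1)[OF that] A(2)[OF that] den(2)[of y] by (simp add: v_def)
    have "(\<lambda>y. (h y)\<^sup>2 * A y / den y) integrable_on {a..b}"
      by (intro integrable_continuous_interval continuous_intros h A(1) den_cont) (simp add: den(3))
    then have K_Kv_int: "(\<lambda>y. K y * (K y * v y)) integrable_on {a..b}"
      by (rule integrable_eq) (rule K_Kv)
    have "integral {a..b} (\<lambda>y. (h y)\<^sup>2 * A y / den y) = integral {a..b} (\<lambda>y. K y * (K y * v y))"
      using K_Kv by (rule integral_cong)
    also have "\<dots> \<le> (SUP y\<in>{a..b}. \<bar>K y\<bar>) * integral {a..b} (\<lambda>y. K y * v y)"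
      by (rule integral_mult_le_SUP_abs[OF K_bdd Kv Kv_nonneg K_Kv_int])
    finally show ?thesis .
  qed
  ultimately show "integral {a..b} (\<lambda>y. (h y)\<^sup>2 * A y / (cmod (complex_of_real (U y) - c))\<^sup>2)
           \<le> (SUP y\<in>{a..b}. \<bar>K y\<bar>) * integral {a..b} (\<lambda>y. K y * A y)"
    unfolding den_def[symmetric] by (meson mult_left_mono order_trans)
qed

theorem lemma2p4:
  fixes y1 y2 \<alpha> \<beta> U\<beta> :: real
    and U U1 U2 U3 K :: "real \<Rightarrow> real"
    and \<phi> d\<phi> dd\<phi> :: "real \<Rightarrow> complex"
    and c :: complex
  assumes y12: "y1 < y2"
    and UK: "class_Kplus y1 y2 U U1 U2 U3"
    and \<beta>_lo: "(INF y\<in>{y1..y2}. U2 y) < \<beta>"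
    and \<beta>_hi: "\<beta> < (SUP y\<in>{y1..y2}. U2 y)"
    and U\<beta>: "U\<beta> \<in> U ` {y1..y2}"
    and K: "is_K y1 y2 U U2 \<beta> U\<beta> K"
    and \<alpha>: "\<alpha> > 0"
    and ci: "Im c > 0"
    and \<phi>_cont: "continuous_on {y1..y2} \<phi>"
    and d\<phi>: "\<And>y. y \<in> {y1<..<y2} \<Longrightarrow> (\<phi> has_vector_derivative d\<phi> y) (at y)"
    and dd\<phi>: "\<And>y. y \<in> {y1<..<y2} \<Longrightarrow> (d\<phi> has_vector_derivative dd\<phi> y) (at y)"
    and eq: "\<And>y. y \<in> {y1<..<y2} \<Longrightarrow>
               - dd\<phi> y + complex_of_real (\<alpha>^2) * \<phi> y
               - (complex_of_real (\<beta> - U2 y) / (complex_of_real (U y) - c)) * \<phi> y = 0"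
    and bc: "\<phi> y1 = 0" "\<phi> y2 = 0"
  shows "(integral {y1..y2} (\<lambda>y. (cmod (d\<phi> y))^2 + \<alpha>^2 * (cmod (\<phi> y))^2)
           \<le> integral {y1..y2} (\<lambda>y. K y * (cmod (\<phi> y))^2))
       \<and> (integral {y1..y2} (\<lambda>y. (cmod (dd\<phi> y))^2 + 2 * \<alpha>^2 * (cmod (d\<phi> y))^2
                                + \<alpha>^4 * (cmod (\<phi> y))^2)
           \<le> (SUP y\<in>{y1..y2}. \<bar>K y\<bar>) * integral {y1..y2} (\<lambda>y. K y * (cmod (\<phi> y))^2))"
proof -
  have U_cont: "continuous_on {y1..y2} U" and h_cont: "continuous_on {y1..y2} (\<lambda>y. \<beta> - U2 y)"
    using UK C3_on_continuous unfolding class_Kplus_def by (auto intro!: continuous_intros)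
  have K_pos: "\<And>y. y \<in> {y1..y2} \<Longrightarrow> K y > 0"
    and K_eq: "\<And>y. y \<in> {y1..y2} \<Longrightarrow> K y * (U y - U\<beta>) = \<beta> - U2 y"
    and K_bdd: "bdd_above ((\<lambda>y. \<bar>K y\<bar>) ` {y1..y2})"
    using K bounded_norm_comp[of K "{y1..y2}"] unfolding is_K_def real_norm_def
    by (auto intro: bounded_imp_bdd_above)
  have "Im c \<noteq> 0"
    using ci by simp
  have A_cont: "continuous_on {y1..y2} (\<lambda>y. (cmod (\<phi> y))\<^sup>2)"
    by (intro continuous_intros \<phi>_cont)
  have A_nonneg: "\<And>y. y \<in> {y1..y2} \<Longrightarrow> 0 \<le> (cmod (\<phi> y))\<^sup>2"
    by simp
  note Rayleigh = y12 U_cont h_cont \<open>Im c \<noteq> 0\<close> \<phi>_cont d\<phi> dd\<phi> eq bc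
  show ?thesis
    using Rayleigh_integral_identities[OF Rayleigh]
      K_weighted_integral_bounds[OF less_imp_le[OF y12] \<open>Im c \<noteq> 0\<close> U_cont h_cont A_cont A_nonneg
        K_pos K_eq K_bdd is_K_mult_integrable_on[OF UK K] Rayleigh_energy_identities(2)[OF Rayleigh]]
    by simp
qed

end
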